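(* Let $n=mp$, where $m$ is a positive integer and $p$ is a prime with $\gcd(m,p)=1$. Let $s,t$ be positive integers with $st=p-1$, and let $g$ be a generator of $\mathbb{Z}_p^\times$. Let $e$ be an integer satisfying $$e\equiv 1\pmod m,\qquad e\equiv g^t\pmod p,$$ and let $G=\langle e\rangle$ be the subgroup of $\mathbb{Z}_n^\times$ generated by $e$. Then the coset index function $f_G$ is an $(mp,\ m(1+t),\ \{0,m(s-1)\})$ zero-difference function.
   Context: For a subgroup $G$ of $\mathbb{Z}_n^\times$ and $r\in\mathbb{Z}_n$, the coset $rG=\{rg\mid g\in G\}$; these cosets partition $\mathbb{Z}_n$, forming a set $D_G$. The coset index function induced by $G$ is $f_G:\mathbb{Z}_n\to\mathbb{Z}_{|D_G|}$, $f_G(x)=h_G(C_x)$, where $C_x$ is the coset containing $x$ and $h_G:D_G\to\mathbb{Z}_{|D_G|}$ is a fixed bijection. A function $f:A\to B$ between finite abelian groups is an $(n,m,S)$ zero-difference function if $n=|A|$, $m=|f(A)|$, and for every nonzero $a\in A$, $|\{x\in A\mid f(x+a)=f(x)\}|\in S$. Here $A=(\mathbb{Z}_n,+)$. *)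

theory Defs
  imports "HOL-Number_Theory.Number_Theory"
begin

text \<open>The ring Z_n is modelled by the integers {0..<n} with arithmetic mod n.\<close>

definition cyc_subgroup :: "int \<Rightarrow> int \<Rightarrow> int set" where
  "cyc_subgroup n e = {e ^ k mod n | k. True}"

definition coset_mul :: "int \<Rightarrow> int set \<Rightarrow> int \<Rightarrow> int set" where
  "coset_mul n G r = {(r * x) mod n | x. x \<in> G}"

definition coset_classes :: "int \<Rightarrow> int set \<Rightarrow> int set set" where
  "coset_classes n G = {coset_mul n G r | r. r \<in> {0..<n}}"

text \<open>Coset index function f_G(x) = h_G(C_x), C_x the coset containing x
  (namely xG, since 1 is in G).\<close>
definition coset_index_fun :: "int \<Rightarrow> int set \<Rightarrow> (int set \<Rightarrow> int) \<Rightarrow> int \<Rightarrow> int" where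
  "coset_index_fun n G h x = h (coset_mul n G (x mod n))"

definition zero_difference_fun :: "int \<Rightarrow> nat \<Rightarrow> nat set \<Rightarrow> (int \<Rightarrow> 'b) \<Rightarrow> bool" where
  "zero_difference_fun n m S f \<longleftrightarrow>
     card (f ` {0..<n}) = m \<and>
     (\<forall>a \<in> {1..<n}. card {x \<in> {0..<n}. f ((x + a) mod n) = f x} \<in> S)"

end

theory Submission
  imports Defs
begin

(* Since e = 1 (mod m), the coset x<e> in Z_mp is determined, via the Chinese remainder
   theorem, by x mod m together with the coset of x mod p under <e mod p>, a subgroup of order s
   of Z_p^*. Modulo p there are the coset {0} and (p - 1)/s = t cosets of size s, hence
   m (1 + t) cosets in all.
   A shift by a fixes the coset of x iff m divides a and x + a = x e^k (mod p) for some k.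
   For such a, p does not divide a, so k ranges over 1..s-1 and each k has the unique solution
   x = a / (e^k - 1) mod p, distinct k giving distinct solutions: s - 1 residues mod p, lifting
   to m (s - 1) elements of Z_mp. *)

lemma card_image_eq_if_same_fibres:
  assumes "\<And>x y. x \<in> A \<Longrightarrow> y \<in> A \<Longrightarrow> F x = F y \<longleftrightarrow> G x = G y"
  shows "card (F ` A) = card (G ` A)"
proof -
  define H where "H c = G (SOME x. x \<in> A \<and> F x = c)" for c
  have H: "H (F x) = G x" if "x \<in> A" for x
  proof -
    have "\<exists>x'. x' \<in> A \<and> F x' = F x" using that by blast
    then have "(SOME x'. x' \<in> A \<and> F x' = F x) \<in> A \<and> F (SOME x'. x' \<in> A \<and> F x' = F x) = F x"
      by (rule someI_ex)
    then show ?thesis unfolding H_def using assms that by blast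
  qed
  have "inj_on H (F ` A)"
    by (rule inj_onI) (auto simp: H assms)
  moreover have "H ` F ` A = G ` A"
    by (force simp: H image_iff)
  ultimately show ?thesis
    by (metis card_image)
qed

lemma atLeastLessThan_Suc_mod_mem:
  fixes P :: int
  assumes P: "P > 0" and U: "U \<subseteq> {0..<P}"
  shows "{x \<in> {0..<int (Suc M) * P}. x mod P \<in> U} =
           {x \<in> {0..<int M * P}. x mod P \<in> U} \<union> (+) (int M * P) ` U"
    (is "?S (Suc M) = ?S M \<union> _")
proof (intro equalityI subsetI)
  fix x assume x: "x \<in> ?S (Suc M)"
  show "x \<in> ?S M \<union> (+) (int M * P) ` U"
  proof (cases "x < int M * P")
    case True
    then show ?thesis using x by simp
  next
    case False
    have "x < int M * P + P" using x by (simp add: distrib_right)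
    then have "(x - int M * P) mod P = x - int M * P"
      using False by (intro mod_pos_pos_trivial) simp_all
    moreover have "(x - int M * P) mod P = x mod P"
      by (metis diff_add_cancel mod_mult_self1)
    ultimately have "x = int M * P + x mod P" by simp
    then show ?thesis using x by (metis UnI2 image_eqI mem_Collect_eq)
  qed
next
  fix x assume "x \<in> ?S M \<union> (+) (int M * P) ` U"
  then show "x \<in> ?S (Suc M)"
  proof
    assume "x \<in> ?S M"
    moreover have "int M * P \<le> int (Suc M) * P" using P by simp
    ultimately show ?thesis by simp
  next
    assume "x \<in> (+) (int M * P) ` U"
    then obtain u where u: "u \<in> U" "x = int M * P + u" by blast
    then have "x mod P = u"
      using U by (auto intro: mod_pos_pos_trivial)
    moreover have "0 \<le> int M * P" using P by simp
    ultimately show ?thesis using U u by (auto simp: distrib_right)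
  qed
qed

lemma card_atLeastLessThan_mod_mem:
  fixes P :: int and M :: nat
  assumes P: "P > 0" and U: "U \<subseteq> {0..<P}"
  shows "card {x \<in> {0..<int M * P}. x mod P \<in> U} = M * card U"
proof (induction M)
  case 0
  then show ?case by simp
next
  case (Suc M)
  let ?S = "\<lambda>M. {x \<in> {0..<int M * P}. x mod P \<in> U}"
  have "?S M \<inter> (+) (int M * P) ` U = {}"
    using U by auto
  moreover have "finite U" using U finite_subset by blast
  moreover have "finite (?S M)" by (rule finite_subset[of _ "{0..<int M * P}"]) auto
  ultimately have "card (?S (Suc M)) = card (?S M) + card ((+) (int M * P) ` U)"
    unfolding atLeastLessThan_Suc_mod_mem[OF assms] by (intro card_Un_disjoint) auto
  then show ?case
    using Suc.IH by (simp add: card_image)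
qed

abbreviation cyc_coset :: "int \<Rightarrow> int \<Rightarrow> int \<Rightarrow> int set" where
  "cyc_coset n e x \<equiv> coset_mul n (cyc_subgroup n e) x"

lemma cyc_coset_eq: "cyc_coset n e x = {x * e ^ k mod n | k. True}"
  unfolding coset_mul_def cyc_subgroup_def by (auto simp: mod_mult_right_eq) (metis mod_mult_right_eq)

lemma cyc_coset_mod [simp]: "cyc_coset n e (x mod n) = cyc_coset n e x"
  unfolding cyc_coset_eq by (simp add: mod_mult_left_eq)

lemma mod_mem_cyc_coset: "x mod n \<in> cyc_coset n e x"
  unfolding cyc_coset_eq by (auto intro: exI[of _ 0])

lemma coset_classes_cyc_subgroup:
  "coset_classes n (cyc_subgroup n e) = cyc_coset n e ` {0..<n}"
  unfolding coset_classes_def by blast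

lemma cyc_coset_subset:
  assumes "[x = y * e ^ k] (mod n)"
  shows "cyc_coset n e x \<subseteq> cyc_coset n e y"
proof
  fix z assume "z \<in> cyc_coset n e x"
  then obtain j where z: "z = x * e ^ j mod n" unfolding cyc_coset_eq by blast
  have "[x * e ^ j = y * e ^ k * e ^ j] (mod n)"
    using assms by (rule cong_mult) simp
  then have "z = y * e ^ (k + j) mod n"
    using z by (simp add: cong_def power_add mult.assoc)
  then show "z \<in> cyc_coset n e y" unfolding cyc_coset_eq by blast
qed

lemma cyc_coset_eq_iff:
  assumes "[e ^ s = 1] (mod n)" and "s > 0"
  shows "cyc_coset n e x = cyc_coset n e y \<longleftrightarrow> (\<exists>k. [x = y * e ^ k] (mod n))"
proof
  assume "cyc_coset n e x = cyc_coset n e y"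
  then have "x mod n \<in> cyc_coset n e y" using mod_mem_cyc_coset by metis
  then show "\<exists>k. [x = y * e ^ k] (mod n)" unfolding cyc_coset_eq cong_def by auto
next
  assume "\<exists>k. [x = y * e ^ k] (mod n)"
  then obtain k where k: "[x = y * e ^ k] (mod n)" ..
  \<comment> \<open>\<open>e ^ (k * (s - 1))\<close> inverts \<open>e ^ k\<close> because \<open>e ^ s = 1\<close>\<close>
  have "[x * e ^ (k * (s - 1)) = y * e ^ k * e ^ (k * (s - 1))] (mod n)"
    using k by (rule cong_mult) simp
  also have "y * e ^ k * e ^ (k * (s - 1)) = y * (e ^ s) ^ k"
    using \<open>s > 0\<close> by (simp add: mult.assoc power_add[symmetric] power_mult[symmetric] algebra_simps)
  also have "[y * (e ^ s) ^ k = y * 1 ^ k] (mod n)"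
    using assms(1) by (intro cong_mult cong_pow) simp_all
  finally have "[y = x * e ^ (k * (s - 1))] (mod n)" by (simp add: cong_sym)
  then show "cyc_coset n e x = cyc_coset n e y"
    using cyc_coset_subset k by blast
qed

lemma cyc_coset_eq_of_mem:
  assumes "[e ^ s = 1] (mod n)" and "s > 0" and "z \<in> cyc_coset n e x"
  shows "cyc_coset n e z = cyc_coset n e x"
proof -
  obtain k where "z = x * e ^ k mod n" using assms(3) unfolding cyc_coset_eq by blast
  then have "[z = x * e ^ k] (mod n)" by (simp add: cong_def)
  then show ?thesis using cyc_coset_eq_iff[OF assms(1,2)] by blast
qed

lemma cong_mult_pow_iff_chinese:
  fixes m p :: nat
  assumes "coprime m p" and "[e = 1] (mod int m)"
  shows "[x = y * e ^ k] (mod int (m * p)) \<longleftrightarrow>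
           [x = y] (mod int m) \<and> [x = y * e ^ k] (mod int p)"
proof -
  have "[y * e ^ k = y * 1 ^ k] (mod int m)"
    using assms(2) by (intro cong_mult cong_pow) simp_all
  then have "[x = y * e ^ k] (mod int m) \<longleftrightarrow> [x = y] (mod int m)"
    by (simp add: cong_def)
  moreover have "coprime (int m) (int p)" using assms(1) by simp
  ultimately show ?thesis
    by (metis cong_dvd_modulus coprime_cong_mult dvd_triv_left dvd_triv_right of_nat_mult)
qed

lemma cyc_coset_eq_iff_chinese:
  fixes m p s :: nat
  assumes "coprime m p" and "[e = 1] (mod int m)" and "[e ^ s = 1] (mod int p)" and "s > 0"
  shows "cyc_coset (int (m * p)) e x = cyc_coset (int (m * p)) e y \<longleftrightarrow>
           [x = y] (mod int m) \<and> cyc_coset (int p) e x = cyc_coset (int p) e y"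
proof -
  have "[e ^ s = 1 ^ s] (mod int m)" using assms(2) by (rule cong_pow)
  then have "[e ^ s = 1] (mod int (m * p))"
    using cong_mult_pow_iff_chinese[OF assms(1,2), of "e ^ s" 1 0] assms(3) by simp
  then have "cyc_coset (int (m * p)) e x = cyc_coset (int (m * p)) e y \<longleftrightarrow>
      (\<exists>k. [x = y * e ^ k] (mod int (m * p)))"
    using \<open>s > 0\<close> by (rule cyc_coset_eq_iff)
  also have "\<dots> \<longleftrightarrow> [x = y] (mod int m) \<and> (\<exists>k. [x = y * e ^ k] (mod int p))"
    using cong_mult_pow_iff_chinese[OF assms(1,2)] by blast
  also have "\<dots> \<longleftrightarrow> [x = y] (mod int m) \<and> cyc_coset (int p) e x = cyc_coset (int p) e y"
    using cyc_coset_eq_iff[OF assms(3,4)] by blast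
  finally show ?thesis .
qed

lemma card_coset_classes_chinese:
  fixes m p s :: nat
  assumes "coprime m p" and "[e = 1] (mod int m)" and "[e ^ s = 1] (mod int p)" and "s > 0"
    and "m > 0" and "p > 0"
  shows "card (coset_classes (int (m * p)) (cyc_subgroup (int (m * p)) e)) =
           m * card (coset_classes (int p) (cyc_subgroup (int p) e))"
proof -
  define \<Phi> where "\<Phi> x = (x mod int m, cyc_coset (int p) e x)" for x
  have "\<Phi> ` {0..<int (m * p)} = {0..<int m} \<times> cyc_coset (int p) e ` {0..<int p}"
  proof (intro equalityI subsetI)
    fix z assume "z \<in> \<Phi> ` {0..<int (m * p)}"
    then obtain x where "z = \<Phi> x" by blast
    then show "z \<in> {0..<int m} \<times> cyc_coset (int p) e ` {0..<int p}"
      using \<open>m > 0\<close> \<open>p > 0\<close> unfolding \<Phi>_def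
      by (auto intro!: image_eqI[of _ _ "x mod int p"])
  next
    fix z assume "z \<in> {0..<int m} \<times> cyc_coset (int p) e ` {0..<int p}"
    then obtain r u where z: "z = (r, cyc_coset (int p) e u)" and r: "r \<in> {0..<int m}" by blast
    have "coprime (int m) (int p)" using assms(1) by simp
    then obtain x0 where "[x0 = r] (mod int m)" "[x0 = u] (mod int p)"
      using binary_chinese_remainder_int by blast
    moreover define x where "x = x0 mod int (m * p)"
    ultimately have "[x = r] (mod int m)" "[x = u] (mod int p)"
      by (metis cong_def mod_mod_cancel dvd_triv_left dvd_triv_right of_nat_mult)+
    then have "\<Phi> x = z"
      using r z unfolding \<Phi>_def cong_def by (metis atLeastLessThan_iff cyc_coset_mod mod_pos_pos_trivial)
    moreover have "x \<in> {0..<int (m * p)}" unfolding x_def using \<open>m > 0\<close> \<open>p > 0\<close> by simp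
    ultimately show "z \<in> \<Phi> ` {0..<int (m * p)}" by blast
  qed
  moreover have "card (cyc_coset (int (m * p)) e ` {0..<int (m * p)}) = card (\<Phi> ` {0..<int (m * p)})"
    by (rule card_image_eq_if_same_fibres)
      (use cyc_coset_eq_iff_chinese[OF assms(1-4)] in \<open>simp add: \<Phi>_def cong_def\<close>)
  ultimately show ?thesis
    by (simp add: coset_classes_cyc_subgroup card_cartesian_product)
qed

lemma coset_index_fun_eq_iff:
  assumes "inj_on h (coset_classes n G)" and "x \<in> {0..<n}" and "y \<in> {0..<n}"
  shows "coset_index_fun n G h x = coset_index_fun n G h y \<longleftrightarrow> coset_mul n G x = coset_mul n G y"
proof -
  have "coset_mul n G x \<in> coset_classes n G" "coset_mul n G y \<in> coset_classes n G"
    using assms(2,3) unfolding coset_classes_def by blast+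
  then show ?thesis
    using assms unfolding coset_index_fun_def by (simp add: inj_on_eq_iff)
qed

lemma card_image_coset_index_fun:
  assumes "inj_on h (coset_classes n G)"
  shows "card (coset_index_fun n G h ` {0..<n}) = card (coset_classes n G)"
proof -
  have "coset_index_fun n G h ` {0..<n} = h ` coset_classes n G"
    unfolding coset_index_fun_def coset_classes_def by force
  then show ?thesis using assms by (simp add: card_image)
qed

lemma cong_mult_iff_modular_inverse:
  fixes u w a n :: int
  assumes "coprime w n"
  shows "[u * w = a] (mod n) \<longleftrightarrow> [u = a * modular_inverse n w] (mod n)"
proof
  assume "[u * w = a] (mod n)"
  then have "[u * w * modular_inverse n w = a * modular_inverse n w] (mod n)"
    by (rule cong_mult) simp
  moreover have "[u * (w * modular_inverse n w) = u * 1] (mod n)"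
    using assms by (intro cong_mult cong_modular_inverse1) simp_all
  ultimately show "[u = a * modular_inverse n w] (mod n)"
    by (metis cong_sym cong_trans mult.assoc mult.right_neutral)
next
  assume "[u = a * modular_inverse n w] (mod n)"
  then have "[u * w = a * (modular_inverse n w * w)] (mod n)"
    by (metis cong_scalar_right mult.assoc)
  also have "[a * (modular_inverse n w * w) = a * 1] (mod n)"
    using assms by (intro cong_mult cong_modular_inverse2) simp_all
  finally show "[u * w = a] (mod n)" by simp
qed

lemma not_dvd_multiple_less_mult:
  fixes m p :: nat
  assumes "coprime m p" and "int m dvd a" and "0 < a" and "a < int (m * p)"
  shows "\<not> int p dvd a"
proof
  assume "int p dvd a"
  then have "int m * int p dvd a"
    using assms(1,2) by (simp add: divides_mult)
  then show False
    using assms(3,4) zdvd_imp_le by fastforce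
qed

lemma pow_cong_iff_of_residue_primroot:
  fixes p g s t :: nat
  assumes "residue_primroot p g" and "s * t = totient p" and "t > 0"
    and "[e = int g ^ t] (mod int p)"
  shows "[e ^ i = e ^ j] (mod int p) \<longleftrightarrow> [i = j] (mod s)"
proof -
  have e_pow: "[e ^ k = int (g ^ (t * k))] (mod int p)" for k
    using cong_pow[OF assms(4), of k] by (simp add: power_mult)
  have "[e ^ i = e ^ j] (mod int p) \<longleftrightarrow> [int (g ^ (t * i)) = int (g ^ (t * j))] (mod int p)"
    using e_pow[of i] e_pow[of j] by (meson cong_sym cong_trans)
  also have "\<dots> \<longleftrightarrow> [g ^ (t * i) = g ^ (t * j)] (mod p)"
    by (rule cong_int_iff)
  also have "\<dots> \<longleftrightarrow> [t * i = t * j] (mod (t * s))"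
    using assms(1,2) order_divides_expdiff[of p g]
    by (simp add: residue_primroot_def mult.commute)
  also have "\<dots> \<longleftrightarrow> [i = j] (mod s)"
    using assms(3) by (simp add: cong_def mod_mult_mult1)
  finally show ?thesis .
qed

locale mult_order_mod_prime =
  fixes p s :: nat and e :: int
  assumes prime: "prime p" and order_pos: "s > 0"
    and pow_cong_iff: "\<And>i j. [e ^ i = e ^ j] (mod int p) \<longleftrightarrow> [i = j] (mod s)"
begin

lemma prime_int: "prime (int p)"
  using prime by simp

lemma pow_order: "[e ^ s = 1] (mod int p)"
  using pow_cong_iff[of s 0] by (simp add: cong_def)

lemma pow_cong_pow_mod: "[e ^ k = e ^ (k mod s)] (mod int p)"
  by (simp only: pow_cong_iff) (simp add: cong_def)

lemma not_dvd_pow: "\<not> int p dvd e ^ k"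
proof
  assume "int p dvd e ^ k"
  then have "int p dvd e" using prime_int prime_dvd_power by blast
  then have "int p dvd e ^ s" using order_pos dvd_power[of s e] dvd_trans by blast
  then have "int p dvd 1" using pow_order by (simp add: cong_dvd_iff)
  then show False using prime_int by (simp add: prime_int_iff)
qed

lemma mult_pow_cong_iff:
  assumes "\<not> int p dvd x"
  shows "[x * e ^ i = x * e ^ j] (mod int p) \<longleftrightarrow> [i = j] (mod s)"
proof -
  have "coprime x (int p)"
    using prime_imp_coprime[OF prime_int assms] by (simp add: coprime_commute)
  then show ?thesis by (simp add: cong_mult_lcancel pow_cong_iff)
qed

lemma cyc_coset_eq_image:
  assumes "\<not> int p dvd x"
  shows "cyc_coset (int p) e x = (\<lambda>k. x * e ^ k mod int p) ` {..<s}"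
proof -
  have "x * e ^ k mod int p \<in> (\<lambda>k. x * e ^ k mod int p) ` {..<s}" for k
  proof
    show "x * e ^ k mod int p = x * e ^ (k mod s) mod int p"
      using mult_pow_cong_iff[OF assms] by (simp add: cong_def[symmetric])
  qed (simp add: order_pos)
  then show ?thesis
    unfolding cyc_coset_eq by auto
qed

lemma card_cyc_coset:
  assumes "\<not> int p dvd x"
  shows "card (cyc_coset (int p) e x) = s"
proof -
  have "inj_on (\<lambda>k. x * e ^ k mod int p) {..<s}"
    by (rule inj_onI)
      (use mult_pow_cong_iff[OF assms] in \<open>auto simp: cong_def[symmetric] cong_less_modulus_unique_nat\<close>)
  then show ?thesis by (simp add: cyc_coset_eq_image[OF assms] card_image)
qed

lemma cyc_coset_subset_units:
  assumes "\<not> int p dvd x"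
  shows "cyc_coset (int p) e x \<subseteq> {1..<int p}"
proof
  fix z assume "z \<in> cyc_coset (int p) e x"
  then obtain k where z: "z = x * e ^ k mod int p" unfolding cyc_coset_eq by blast
  have "\<not> int p dvd x * e ^ k"
    using assms not_dvd_pow prime_int by (simp add: prime_dvd_mult_iff)
  then have "z \<noteq> 0" using z by (simp add: dvd_eq_mod_eq_0)
  moreover have "0 \<le> z" "z < int p" using z prime_gt_0_nat[OF prime] by simp_all
  ultimately show "z \<in> {1..<int p}" by simp
qed

lemma card_cyc_cosets_units:
  "s * card (cyc_coset (int p) e ` {1..<int p}) = p - 1"
proof -
  let ?C = "cyc_coset (int p) e ` {1..<int p}"
  have not_dvd: "\<not> int p dvd x" if "x \<in> {1..<int p}" for x
    using that zdvd_not_zless by auto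
  have union: "\<Union> ?C = {1..<int p}"
  proof (intro equalityI subsetI)
    fix x assume "x \<in> {1..<int p}"
    then have "x \<in> cyc_coset (int p) e x"
      using mod_mem_cyc_coset[of x "int p" e] by simp
    then show "x \<in> \<Union> ?C" using \<open>x \<in> {1..<int p}\<close> by blast
  next
    fix z assume "z \<in> \<Union> ?C"
    then obtain x where "x \<in> {1..<int p}" "z \<in> cyc_coset (int p) e x" by blast
    then show "z \<in> {1..<int p}" using cyc_coset_subset_units not_dvd by blast
  qed
  have disjoint: "c \<inter> c' = {}" if "c \<in> ?C" "c' \<in> ?C" "c \<noteq> c'" for c c'
  proof -
    have "c = c'" if "z \<in> c" "z \<in> c'" for z
    proof -
      obtain x y where "c = cyc_coset (int p) e x" "c' = cyc_coset (int p) e y"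
        using \<open>c \<in> ?C\<close> \<open>c' \<in> ?C\<close> by blast
      then show "c = c'"
        using that cyc_coset_eq_of_mem[OF pow_order order_pos] by metis
    qed
    then show ?thesis using \<open>c \<noteq> c'\<close> by blast
  qed
  have card_eq: "card c = s" if "c \<in> ?C" for c
    using card_cyc_coset not_dvd that by blast
  have "s * card ?C = card (\<Union> ?C)"
    by (rule card_partition) (use card_eq disjoint union in auto)
  also have "\<dots> = p - 1"
    unfolding union by simp
  finally show ?thesis .
qed

lemma card_coset_classes:
  "card (coset_classes (int p) (cyc_subgroup (int p) e)) = 1 + (p - 1) div s"
proof -
  let ?C = "cyc_coset (int p) e ` {1..<int p}"
  have "cyc_coset (int p) e 0 = {0}"
    unfolding cyc_coset_eq by simp
  moreover have "{0..<int p} = insert 0 {1..<int p}"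
    using prime_gt_0_nat[OF prime] by auto
  ultimately have classes: "coset_classes (int p) (cyc_subgroup (int p) e) = insert {0} ?C"
    by (simp add: coset_classes_cyc_subgroup)
  have "{0} \<notin> ?C"
  proof
    assume "{0} \<in> ?C"
    then obtain x where x: "x \<in> {1..<int p}" "{0} = cyc_coset (int p) e x" by blast
    then have "\<not> int p dvd x" using zdvd_not_zless by auto
    then have "{0} \<subseteq> {1..<int p}" using x(2) cyc_coset_subset_units by metis
    then show False by simp
  qed
  then have "card (coset_classes (int p) (cyc_subgroup (int p) e)) = 1 + card ?C"
    by (simp add: classes)
  moreover have "card ?C = (p - 1) div s"
    using card_cyc_cosets_units order_pos by (metis nonzero_mult_div_cancel_left not_gr0)
  ultimately show ?thesis by simp
qed

lemma coprime_pow_minus_one: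
  assumes "k \<in> {1..<s}"
  shows "coprime (e ^ k - 1) (int p)"
proof -
  have "\<not> ([k = 0] (mod s))"
    using assms by (simp add: cong_def)
  then have "\<not> ([e ^ k = e ^ 0] (mod int p))"
    using pow_cong_iff by blast
  then have "\<not> int p dvd e ^ k - 1"
    by (simp add: cong_iff_dvd_diff)
  then show ?thesis
    using prime_imp_coprime[OF prime_int] coprime_commute by blast
qed

lemma cyc_coset_shift_eq_iff:
  assumes "\<not> int p dvd a"
  shows "cyc_coset (int p) e (u + a) = cyc_coset (int p) e u \<longleftrightarrow>
           (\<exists>k \<in> {1..<s}. [u * (e ^ k - 1) = a] (mod int p))"
proof -
  have solves_iff: "[u + a = u * e ^ k] (mod int p) \<longleftrightarrow> [u * (e ^ k - 1) = a] (mod int p)" for k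
  proof -
    have "u * (e ^ k - 1) - a = - (u + a - u * e ^ k)" by (simp add: algebra_simps)
    then have "int p dvd u * (e ^ k - 1) - a \<longleftrightarrow> int p dvd u + a - u * e ^ k"
      by (simp only: dvd_minus_iff)
    then show ?thesis by (simp only: cong_iff_dvd_diff)
  qed
  have "cyc_coset (int p) e (u + a) = cyc_coset (int p) e u \<longleftrightarrow>
      (\<exists>k. [u + a = u * e ^ k] (mod int p))"
    by (rule cyc_coset_eq_iff[OF pow_order order_pos])
  also have "\<dots> \<longleftrightarrow> (\<exists>k \<in> {1..<s}. [u + a = u * e ^ k] (mod int p))"
  proof
    assume "\<exists>k. [u + a = u * e ^ k] (mod int p)"
    then obtain k where k: "[u + a = u * e ^ k] (mod int p)" ..
    have "[u * e ^ k = u * e ^ (k mod s)] (mod int p)"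
      by (intro cong_mult cong_refl pow_cong_pow_mod)
    with k have k_mod: "[u + a = u * e ^ (k mod s)] (mod int p)"
      by (rule cong_trans)
    have "k mod s \<noteq> 0"
    proof
      assume "k mod s = 0"
      then have "[u + a = u] (mod int p)" using k_mod by simp
      then show False using assms by (simp add: cong_iff_dvd_diff)
    qed
    then show "\<exists>k \<in> {1..<s}. [u + a = u * e ^ k] (mod int p)"
      using k_mod order_pos by (intro bexI[of _ "k mod s"]) auto
  qed blast
  finally show ?thesis by (simp add: solves_iff)
qed

lemma card_cyc_coset_shift_eq:
  assumes "\<not> int p dvd a"
  shows "card {u \<in> {0..<int p}. cyc_coset (int p) e (u + a) = cyc_coset (int p) e u} = s - 1"
proof -
  define \<sigma> where "\<sigma> k = a * modular_inverse (int p) (e ^ k - 1) mod int p" for k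
  have p_pos: "int p > 0" using prime_gt_0_nat[OF prime] by simp
  have solution_iff: "[u * (e ^ k - 1) = a] (mod int p) \<longleftrightarrow> u = \<sigma> k"
    if "k \<in> {1..<s}" "u \<in> {0..<int p}" for k u
    using that p_pos cong_mult_iff_modular_inverse[OF coprime_pow_minus_one[OF that(1)]]
    by (auto simp: \<sigma>_def cong_def)
  have \<sigma>_range: "\<sigma> k \<in> {0..<int p}" for k
    using p_pos by (simp add: \<sigma>_def)
  have "{u \<in> {0..<int p}. cyc_coset (int p) e (u + a) = cyc_coset (int p) e u} = \<sigma> ` {1..<s}"
  proof (intro equalityI subsetI)
    fix u assume "u \<in> {u \<in> {0..<int p}. cyc_coset (int p) e (u + a) = cyc_coset (int p) e u}"
    then show "u \<in> \<sigma> ` {1..<s}"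
      using solution_iff by (auto simp: cyc_coset_shift_eq_iff[OF assms])
  next
    fix u assume "u \<in> \<sigma> ` {1..<s}"
    then obtain k where "k \<in> {1..<s}" "u = \<sigma> k" by blast
    then show "u \<in> {u \<in> {0..<int p}. cyc_coset (int p) e (u + a) = cyc_coset (int p) e u}"
      using solution_iff \<sigma>_range by (auto simp: cyc_coset_shift_eq_iff[OF assms])
  qed
  moreover have "inj_on \<sigma> {1..<s}"
  proof (rule inj_onI)
    fix i j assume ij: "i \<in> {1..<s}" "j \<in> {1..<s}" "\<sigma> i = \<sigma> j"
    let ?u = "\<sigma> i"
    have "[?u * (e ^ i - 1) = a] (mod int p)" "[?u * (e ^ j - 1) = a] (mod int p)"
      using ij solution_iff \<sigma>_range by metis+
    then have "[?u * e ^ i = ?u * e ^ j] (mod int p)"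
      by (metis (no_types, lifting) cong_add_rcancel cong_sym cong_trans diff_add_cancel
          right_diff_distrib')
    moreover have "\<not> int p dvd ?u"
      using \<open>[?u * (e ^ i - 1) = a] (mod int p)\<close> assms
      by (metis cong_dvd_iff dvd_mult2)
    ultimately have "[i = j] (mod s)" by (simp add: mult_pow_cong_iff)
    then show "i = j" using ij cong_less_modulus_unique_nat by auto
  qed
  ultimately show ?thesis by (simp add: card_image)
qed

lemma coset_index_fun_shift_eq_iff:
  fixes m :: nat
  assumes "coprime m p" and "[e = 1] (mod int m)"
    and "inj_on h (coset_classes (int (m * p)) (cyc_subgroup (int (m * p)) e))"
    and "x \<in> {0..<int (m * p)}"
  shows "coset_index_fun (int (m * p)) (cyc_subgroup (int (m * p)) e) h ((x + a) mod int (m * p)) =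
           coset_index_fun (int (m * p)) (cyc_subgroup (int (m * p)) e) h x \<longleftrightarrow>
         int m dvd a \<and>
           x mod int p \<in> {u \<in> {0..<int p}. cyc_coset (int p) e (u + a) = cyc_coset (int p) e u}"
proof -
  have "(x + a) mod int (m * p) \<in> {0..<int (m * p)}"
    using assms(4) by simp
  then have "coset_index_fun (int (m * p)) (cyc_subgroup (int (m * p)) e) h ((x + a) mod int (m * p)) =
      coset_index_fun (int (m * p)) (cyc_subgroup (int (m * p)) e) h x \<longleftrightarrow>
      cyc_coset (int (m * p)) e (x + a) = cyc_coset (int (m * p)) e x"
    using coset_index_fun_eq_iff[OF assms(3) _ assms(4)] by simp
  also have "\<dots> \<longleftrightarrow> [x + a = x] (mod int m) \<and> cyc_coset (int p) e (x + a) = cyc_coset (int p) e x"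
    by (rule cyc_coset_eq_iff_chinese[OF assms(1,2) pow_order order_pos])
  also have "cyc_coset (int p) e (x + a) = cyc_coset (int p) e (x mod int p + a)"
    by (metis cyc_coset_mod mod_add_left_eq)
  also have "cyc_coset (int p) e x = cyc_coset (int p) e (x mod int p)"
    by simp
  also have "[x + a = x] (mod int m) \<longleftrightarrow> int m dvd a"
    by (simp add: cong_iff_dvd_diff)
  finally show ?thesis
    using prime_gt_0_nat[OF prime] by simp
qed

lemma zero_difference_fun_coset_index_fun:
  fixes m :: nat
  assumes "m > 0" and "coprime m p" and "[e = 1] (mod int m)"
    and inj: "inj_on h (coset_classes (int (m * p)) (cyc_subgroup (int (m * p)) e))"
  shows "zero_difference_fun (int (m * p)) (m * (1 + (p - 1) div s)) {0, m * (s - 1)}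
           (coset_index_fun (int (m * p)) (cyc_subgroup (int (m * p)) e) h)"
proof -
  let ?n = "int (m * p)"
  let ?f = "coset_index_fun ?n (cyc_subgroup ?n e) h"
  let ?U = "\<lambda>a. {u \<in> {0..<int p}. cyc_coset (int p) e (u + a) = cyc_coset (int p) e u}"
  have "card (?f ` {0..<?n}) = m * (1 + (p - 1) div s)"
    using card_image_coset_index_fun[OF inj] card_coset_classes
      card_coset_classes_chinese[OF assms(2,3) pow_order order_pos assms(1) prime_gt_0_nat[OF prime]]
    by simp
  moreover have "card {x \<in> {0..<?n}. ?f ((x + a) mod ?n) = ?f x} \<in> {0, m * (s - 1)}"
    if a: "a \<in> {1..<?n}" for a
  proof (cases "int m dvd a")
    case False
    then have "{x \<in> {0..<?n}. ?f ((x + a) mod ?n) = ?f x} = {}"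
      using coset_index_fun_shift_eq_iff[OF assms(2,3) inj] by blast
    then show ?thesis by (simp only: card.empty insertI1)
  next
    case True
    then have "{x \<in> {0..<?n}. ?f ((x + a) mod ?n) = ?f x} =
        {x \<in> {0..<int m * int p}. x mod int p \<in> ?U a}"
      using coset_index_fun_shift_eq_iff[OF assms(2,3) inj] by auto
    then have "card {x \<in> {0..<?n}. ?f ((x + a) mod ?n) = ?f x} =
        card {x \<in> {0..<int m * int p}. x mod int p \<in> ?U a}"
      by (rule arg_cong)
    also have "\<dots> = m * card (?U a)"
      by (rule card_atLeastLessThan_mod_mem) (use prime_gt_0_nat[OF prime] in auto)
    also have "card (?U a) = s - 1"
      using card_cyc_coset_shift_eq not_dvd_multiple_less_mult[OF assms(2) True] a by simp
    finally show ?thesis by simp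
  qed
  ultimately show ?thesis
    unfolding zero_difference_fun_def by blast
qed

end

theorem theorem3p9:
  fixes m p s t g :: nat and e :: int and h :: "int set \<Rightarrow> int"
  assumes "m > 0" and "prime p" and "coprime m p"
    and "s > 0" and "t > 0" and "s * t = p - 1"
    and "residue_primroot p g"
    and "[e = 1] (mod int m)" and "[e = int g ^ t] (mod int p)"
    and "bij_betw h (coset_classes (int (m * p)) (cyc_subgroup (int (m * p)) e))
           {0..<int (card (coset_classes (int (m * p)) (cyc_subgroup (int (m * p)) e)))}"
  shows "zero_difference_fun (int (m * p)) (m * (1 + t)) {0, m * (s - 1)}
           (coset_index_fun (int (m * p)) (cyc_subgroup (int (m * p)) e) h)"
proof -
  have totient: "s * t = totient p"
    using assms(2,6) by (simp add: totient_prime)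
  interpret mult_order_mod_prime p s e
    using assms(2,4) pow_cong_iff_of_residue_primroot[OF assms(7) totient assms(5,9)]
    by unfold_locales auto
  have "(p - 1) div s = t"
    using assms(4,6) by (metis div_mult_self1_is_m)
  then show ?thesis
    using zero_difference_fun_coset_index_fun[OF assms(1,3,8) bij_betw_imp_inj_on[OF assms(10)]]
    by simp
qed

end
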